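(* Assume (H1), (H2), fix $\lambda>f'(0)$, and let $s_*$ be a $\lambda$-conjugate point. Let $p(\cdot;\lambda)$, $q(\cdot;\lambda)$ be solutions of $q'=B(x,\lambda)q$ decaying as $x\to-\infty$ such that $p(s_*;\lambda),q(s_*;\lambda)$ form a basis of $\mathbb E^u_-(s_*,\lambda)$ and $p(s_*;\lambda)\in\ell_*^{sand}$. Then there is $\alpha\in\mathbb R$ such that $p(s_*;\lambda)=(0,\ p_2(s_*;\lambda),\ p_3(s_*;\lambda),\ 0)^T$ and $q(s_*;\lambda)=(\alpha p_2(s_*;\lambda),\ q_2(s_*;\lambda),\ q_3(s_*;\lambda),\ \alpha p_3(s_*;\lambda))^T$.
   Context: Fix real $\nu,\mu$ and $f(u)=\nu u^2-u^3-\mu u$. (H1): $\varphi$ is a smooth stationary solution of $u_t=-(1+\partial_x^2)^2u+f(u)$ with $\varphi\to0$ at $\pm\infty$. (H2): $f'(0)<0$. $B(x,\lambda)=\begin{pmatrix}0&0&0&1\\0&0&1&-2\\-\lambda-1+f'(\varphi(x))&0&0&0\\0&1&0&0\end{pmatrix}$. $\mathbb E^u_-(x,\lambda)$ is the set of values $q(x)$ of solutions of $q'=B(y,\lambda)q$ with $q(y)\to0$ as $y\to-\infty$; it is Lagrangian for $\omega(u,v)=\langle u,Jv\rangle$, $J=\begin{pmatrix}0&I_2\\-I_2&0\end{pmatrix}$. $\ell_*^{sand}=\{q\in\mathbb R^4:q_1=q_4=0\}$; $s$ is a $\lambda$-conjugate point if $\mathbb E^u_-(s,\lambda)\cap\ell_*^{sand}\neq\{0\}$.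 *)

theory Defs
  imports "HOL-Analysis.Analysis"
begin

definition fnl :: "real \<Rightarrow> real \<Rightarrow> real \<Rightarrow> real" where
  "fnl \<nu> \<mu> u = \<nu> * u\<^sup>2 - u ^ 3 - \<mu> * u"

definition smooth_fun :: "(real \<Rightarrow> real) \<Rightarrow> bool" where
  "smooth_fun g \<longleftrightarrow> (\<forall>n. (deriv ^^ n) g differentiable_on UNIV)"

text \<open>(H1): phi is a smooth stationary solution of u_t = -(1+d_x^2)^2 u + f(u),
  i.e. -(phi'''' + 2 phi'' + phi) + f(phi) = 0, with phi -> 0 at +-infinity.\<close>
definition H1 :: "real \<Rightarrow> real \<Rightarrow> (real \<Rightarrow> real) \<Rightarrow> bool" where
  "H1 \<nu> \<mu> \<phi> \<longleftrightarrow> smooth_fun \<phi> \<and>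
     (\<forall>x. - ((deriv ^^ 4) \<phi> x + 2 * (deriv ^^ 2) \<phi> x + \<phi> x) + fnl \<nu> \<mu> (\<phi> x) = 0) \<and>
     (\<phi> \<longlongrightarrow> 0) at_top \<and> (\<phi> \<longlongrightarrow> 0) at_bot"

definition H2 :: "real \<Rightarrow> real \<Rightarrow> bool" where
  "H2 \<nu> \<mu> \<longleftrightarrow> deriv (fnl \<nu> \<mu>) 0 < 0"

text \<open>The matrix B(x,lambda); components indexed 1..4 (index 4 of type 4 is the 4th one).\<close>
definition Bmat :: "real \<Rightarrow> real \<Rightarrow> (real \<Rightarrow> real) \<Rightarrow> real \<Rightarrow> real \<Rightarrow> real^4^4" where
  "Bmat \<nu> \<mu> \<phi> x lam = vector [
      vector [0, 0, 0, 1],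
      vector [0, 0, 1, -2],
      vector [- lam - 1 + deriv (fnl \<nu> \<mu>) (\<phi> x), 0, 0, 0],
      vector [0, 1, 0, 0]]"

definition decaying_sol :: "real \<Rightarrow> real \<Rightarrow> (real \<Rightarrow> real) \<Rightarrow> real \<Rightarrow> (real \<Rightarrow> real^4) \<Rightarrow> bool" where
  "decaying_sol \<nu> \<mu> \<phi> lam q \<longleftrightarrow>
     (\<forall>y. (q has_vector_derivative (Bmat \<nu> \<mu> \<phi> y lam *v q y)) (at y)) \<and>
     (q \<longlongrightarrow> 0) at_bot"

definition Eu :: "real \<Rightarrow> real \<Rightarrow> (real \<Rightarrow> real) \<Rightarrow> real \<Rightarrow> real \<Rightarrow> (real^4) set" where
  "Eu \<nu> \<mu> \<phi> x lam = {q x | q. decaying_sol \<nu> \<mu> \<phi> lam q}"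

definition ell_sand :: "(real^4) set" where
  "ell_sand = {q. q $ 1 = 0 \<and> q $ 4 = 0}"

definition conjugate_point :: "real \<Rightarrow> real \<Rightarrow> (real \<Rightarrow> real) \<Rightarrow> real \<Rightarrow> real \<Rightarrow> bool" where
  "conjugate_point \<nu> \<mu> \<phi> lam s \<longleftrightarrow> Eu \<nu> \<mu> \<phi> s lam \<inter> ell_sand \<noteq> {0}"

end

theory Submission
  imports Defs
begin

text \<open>The symplectic form \<open>\<omega>(u,v) = \<langle>u, J v\<rangle>\<close> is conserved along pairs of solutions of
  \<open>q' = B(x,\<lambda>) q\<close>, because \<open>B\<close> is Hamiltonian (\<open>B\<^sup>T J + J B = 0\<close>). For solutions decaying at
  \<open>-\<infinity>\<close> the conserved value is \<open>0\<close>, so \<open>\<omega>(p(s), q(s)) = 0\<close>. With \<open>p\<^sub>1(s) = p\<^sub>4(s) = 0\<close> this reads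
  \<open>p\<^sub>2 q\<^sub>4 = p\<^sub>3 q\<^sub>1\<close>, and since \<open>p(s) \<noteq> 0\<close> the pair \<open>(q\<^sub>1, q\<^sub>4)\<close> is a multiple of \<open>(p\<^sub>2, p\<^sub>3)\<close>.
  Only the decay of \<open>p, q\<close>, the independence of \<open>p(s), q(s)\<close> and \<open>p(s) \<in> \<ell>\<^sub>*\<close> are used.\<close>

lemma matrix_form_const_along_linear_flow:
  fixes p q :: "real \<Rightarrow> real^'n" and B :: "real \<Rightarrow> real^'n^'n" and J :: "real^'n^'n"
  assumes p': "\<And>y. (p has_vector_derivative B y *v p y) (at y)"
    and q': "\<And>y. (q has_vector_derivative B y *v q y) (at y)"
    and hamiltonian: "\<And>y. transpose (B y) ** J + J ** B y = 0"
  shows "p x \<bullet> (J *v q x) = p y \<bullet> (J *v q y)"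
proof (rule DERIV_isconst_all[of "\<lambda>x. p x \<bullet> (J *v q x)"], intro allI)
  fix t
  have Jq': "((\<lambda>x. J *v q x) has_vector_derivative J *v (B t *v q t)) (at t)"
    using bounded_linear.has_vector_derivative[OF matrix_vector_mul_bounded_linear q'] .
  have deriv: "((\<lambda>x. p x \<bullet> (J *v q x)) has_vector_derivative
          p t \<bullet> (J *v (B t *v q t)) + (B t *v p t) \<bullet> (J *v q t)) (at t)"
    using bounded_bilinear.has_vector_derivative[OF bounded_bilinear_inner p' Jq'] .
  have transpose_step: "(B t *v p t) \<bullet> (J *v q t) = p t \<bullet> ((transpose (B t) ** J) *v q t)"
    using dot_lmul_matrix[of "p t" "transpose (B t)"]
    by (simp add: matrix_vector_mul_assoc[symmetric])
  have "p t \<bullet> (J *v (B t *v q t)) + (B t *v p t) \<bullet> (J *v q t)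
          = p t \<bullet> ((transpose (B t) ** J + J ** B t) *v q t)"
    by (simp add: transpose_step matrix_vector_mul_assoc matrix_vector_mult_add_rdistrib
        inner_add_right)
  with deriv show "((\<lambda>x. p x \<bullet> (J *v q x)) has_real_derivative 0) (at t)"
    by (simp add: hamiltonian has_real_derivative_iff_has_vector_derivative)
qed

lemma matrix_form_vanishes_on_decaying_flow:
  fixes p q :: "real \<Rightarrow> real^'n" and B :: "real \<Rightarrow> real^'n^'n" and J :: "real^'n^'n"
  assumes "\<And>y. (p has_vector_derivative B y *v p y) (at y)"
    and "\<And>y. (q has_vector_derivative B y *v q y) (at y)"
    and "\<And>y. transpose (B y) ** J + J ** B y = 0"
    and p_decay: "(p \<longlongrightarrow> 0) at_bot" and q_decay: "(q \<longlongrightarrow> 0) at_bot"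
  shows "p s \<bullet> (J *v q s) = 0"
proof -
  have "((\<lambda>x. p x \<bullet> (J *v q x)) \<longlongrightarrow> 0 \<bullet> (J *v 0)) at_bot"
    by (intro tendsto_intros p_decay q_decay
        matrix_vector_mul_bounded_linear[THEN bounded_linear.tendsto])
  moreover have "(\<lambda>x. p x \<bullet> (J *v q x)) = (\<lambda>x. p s \<bullet> (J *v q s))"
    using matrix_form_const_along_linear_flow[OF assms(1-3)] by blast
  ultimately show ?thesis
    by (simp add: tendsto_const_iff)
qed

definition symplectic_J :: "real^4^4" where
  "symplectic_J = vector [
      vector [0, 0, 1, 0],
      vector [0, 0, 0, 1],
      vector [-1, 0, 0, 0],
      vector [0, -1, 0, 0]]"

lemma vector_4_nth [simp]:
  "(vector [x, y, z, w] :: 'a::zero^4) $ 1 = x"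
  "(vector [x, y, z, w] :: 'a::zero^4) $ 2 = y"
  "(vector [x, y, z, w] :: 'a::zero^4) $ 3 = z"
  "(vector [x, y, z, w] :: 'a::zero^4) $ 4 = w"
  by (simp_all add: vector_def)

lemma inner_symplectic_J:
  "u \<bullet> (symplectic_J *v v) = u$1 * v$3 + u$2 * v$4 - u$3 * v$1 - u$4 * v$2"
  by (simp add: symplectic_J_def inner_vec_def matrix_vector_mult_def sum_4)

lemma Bmat_hamiltonian:
  "transpose (Bmat \<nu> \<mu> \<phi> x lam) ** symplectic_J + symplectic_J ** Bmat \<nu> \<mu> \<phi> x lam = 0"
  by (simp add: vec_eq_iff forall_4 Bmat_def symplectic_J_def transpose_def
      matrix_matrix_mult_def sum_4)

lemma decaying_sols_symplectic_orthogonal: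
  assumes "decaying_sol \<nu> \<mu> \<phi> lam p" and "decaying_sol \<nu> \<mu> \<phi> lam q"
  shows "p s \<bullet> (symplectic_J *v q s) = 0"
  using assms unfolding decaying_sol_def
  by (intro matrix_form_vanishes_on_decaying_flow[OF _ _ Bmat_hamiltonian]) auto

lemma proportional_if_cross_zero:
  fixes a b c d :: real
  assumes "a \<noteq> 0 \<or> b \<noteq> 0" and "a * d = b * c"
  shows "\<exists>\<alpha>. c = \<alpha> * a \<and> d = \<alpha> * b"
proof (cases "a = 0")
  case True
  with assms show ?thesis by (intro exI[of _ "d / b"]) auto
next
  case False
  with assms show ?thesis by (intro exI[of _ "c / a"]) (auto simp: field_simps)
qed

theorem lemma3:
  fixes \<nu> \<mu> lam s :: real and \<phi> :: "real \<Rightarrow> real" and p q :: "real \<Rightarrow> real^4"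
  assumes "H1 \<nu> \<mu> \<phi>" and "H2 \<nu> \<mu>"
    and "lam > deriv (fnl \<nu> \<mu>) 0"
    and "conjugate_point \<nu> \<mu> \<phi> lam s"
    and "decaying_sol \<nu> \<mu> \<phi> lam p" and "decaying_sol \<nu> \<mu> \<phi> lam q"
    and "p s \<noteq> q s" and "independent {p s, q s}"
    and "span {p s, q s} = Eu \<nu> \<mu> \<phi> s lam"
    and "p s \<in> ell_sand"
  shows "\<exists>\<alpha>::real. p s = vector [0, p s $ 2, p s $ 3, 0] \<and>
                    q s = vector [\<alpha> * p s $ 2, q s $ 2, q s $ 3, \<alpha> * p s $ 3]"
proof -
  have p1: "p s $ 1 = 0" and p4: "p s $ 4 = 0"
    using \<open>p s \<in> ell_sand\<close> by (auto simp: ell_sand_def)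
  have "p s \<noteq> 0"
    using \<open>independent {p s, q s}\<close> dependent_zero[of "{p s, q s}"] by auto
  with p1 p4 have p_nonzero: "p s $ 2 \<noteq> 0 \<or> p s $ 3 \<noteq> 0"
    by (auto simp: vec_eq_iff forall_4)
  have symplectic: "p s $ 2 * q s $ 4 = p s $ 3 * q s $ 1"
    using decaying_sols_symplectic_orthogonal[OF assms(5,6), of s] p1 p4
    by (simp add: inner_symplectic_J)
  obtain \<alpha> where q1: "q s $ 1 = \<alpha> * p s $ 2" and q4: "q s $ 4 = \<alpha> * p s $ 3"
    using proportional_if_cross_zero[OF p_nonzero symplectic] by blast
  show ?thesis
    by (intro exI[of _ \<alpha>]) (simp add: vec_eq_iff forall_4 p1 p4 q1 q4)
qed

end
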